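(* Let $\mathbb{N}$ be a strongly connected directed graph on vertices $\{1,\dots,m\}$, let $\mathcal{J}=\{ij: i\in\{1,\dots,m\},\ j\in\bar{\mathcal{N}}_i\}$ be its set of arcs ($ij$ denoting the arc from $j$ to $i$, $\bar{\mathcal{N}}_i$ the set of $j\neq i$ with such an arc), let $b_i$ be the $i$-th unit vector of $\mathbb{R}^m$, and let $c_{ij}\in\mathbb{R}^{1\times m}$ have entry $-1$ in position $i$, $+1$ in position $j$, and zeros elsewhere. Consider the $|\mathcal{J}|$-channel system $$\dot z=\sum_{ij\in\mathcal{J}}b_iv_{ij},\qquad w_{ij}=c_{ij}z,\quad ij\in\mathcal{J},$$ with state $z\in\mathbb{R}^m$, in which channel $ij$ has input matrix $b_i$ and output matrix $c_{ij}$. Then every complementary subsystem of this system is complete.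
   Context: For a nonempty proper subset $\mathcal{C}\subset\mathcal{J}$ with complement $\bar{\mathcal{C}}=\mathcal{J}\setminus\mathcal{C}$, the complementary subsystem determined by $\mathcal{C}$ is the triple $(\mathbf{C},0_{m\times m},\mathbf{B})$ with $\mathbf{B}$ the block row of the $b_i$, $ij\in\mathcal{C}$, and $\mathbf{C}$ the block column of the $c_{ij}$, $ij\in\bar{\mathcal{C}}$. It is complete if its transfer matrix $\mathbf{C}(sI)^{-1}\mathbf{B}$ is nonzero and the pencil $\begin{bmatrix}\lambda I&\mathbf{B}\\ \mathbf{C}&0\end{bmatrix}$ has rank at least $m$ for every complex $\lambda$. *)

theory Defs
  imports "Jordan_Normal_Form.DL_Rank" "HOL-Library.Product_Lexorder"
begin

text \<open>Vertices are 0..m-1 (the paper's 1..m shifted by one).  The arc set J is a set of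
  pairs (i,j), where the pair (i,j) stands for the paper's arc ij, i.e. the arc from j to i.\<close>

definition strongly_connected :: "nat \<Rightarrow> (nat \<times> nat) set \<Rightarrow> bool" where
  "strongly_connected m J \<longleftrightarrow> (\<forall>u<m. \<forall>v<m. (u, v) \<in> J\<^sup>*)"

definition b_vec :: "nat \<Rightarrow> nat \<Rightarrow> complex vec" where
  "b_vec m i = unit_vec m i"

definition c_row :: "nat \<Rightarrow> nat \<Rightarrow> nat \<Rightarrow> complex vec" where
  "c_row m i j = vec m (\<lambda>k. if k = i then -1 else if k = j then 1 else 0)"

definition B_mat :: "nat \<Rightarrow> (nat \<times> nat) list \<Rightarrow> complex mat" where
  "B_mat m cs = mat_of_cols m (map (\<lambda>(i, j). b_vec m i) cs)"

definition C_mat :: "nat \<Rightarrow> (nat \<times> nat) list \<Rightarrow> complex mat" where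
  "C_mat m ds = mat_of_rows m (map (\<lambda>(i, j). c_row m i j) ds)"

definition transfer_mat :: "nat \<Rightarrow> complex mat \<Rightarrow> complex mat \<Rightarrow> complex \<Rightarrow> complex mat" where
  "transfer_mat m Cm Bm s = Cm * (inverse s \<cdot>\<^sub>m 1\<^sub>m m) * Bm"

definition pencil :: "nat \<Rightarrow> complex mat \<Rightarrow> complex mat \<Rightarrow> complex \<Rightarrow> complex mat" where
  "pencil m Cm Bm l = four_block_mat (l \<cdot>\<^sub>m 1\<^sub>m m) Bm Cm (0\<^sub>m (dim_row Cm) (dim_col Bm))"

text \<open>Completeness of a triple (C, 0_{m x m}, B) with state dimension m: the transfer
  matrix (a rational matrix function of s) is not identically zero, and the pencil has rank
  at least m for every complex lambda.\<close>
definition complete_triple :: "nat \<Rightarrow> complex mat \<Rightarrow> complex mat \<Rightarrow> bool" where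
  "complete_triple m Cm Bm \<longleftrightarrow>
     (\<exists>s. s \<noteq> 0 \<and> transfer_mat m Cm Bm s \<noteq> 0\<^sub>m (dim_row Cm) (dim_col Bm)) \<and>
     (\<forall>l. vec_space.rank (m + dim_row Cm) (pencil m Cm Bm l) \<ge> m)"

definition complementary_complete :: "nat \<Rightarrow> (nat \<times> nat) set \<Rightarrow> (nat \<times> nat) set \<Rightarrow> bool" where
  "complementary_complete m J Cs \<longleftrightarrow>
     complete_triple m (C_mat m (sorted_list_of_set (J - Cs))) (B_mat m (sorted_list_of_set Cs))"

end

theory Submission
  imports Defs
begin

text \<open>The transfer matrix is \<open>s\<^sup>-\<^sup>1 C B\<close>, so it suffices to find an arc \<open>ij\<close> outside \<open>\<C>\<close>
  having an endpoint in the set \<open>H\<close> of heads of arcs in \<open>\<C>\<close>; such an arc exists because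
  otherwise the vertices outside \<open>H\<close> would form a nonempty proper set that no arc enters
  from \<open>H\<close>, contradicting strong connectivity. For the pencil, if \<open>\<lambda> \<noteq> 0\<close> the block \<open>\<lambda>I\<close>
  already has rank \<open>m\<close>. For \<open>\<lambda> = 0\<close> select the column of \<open>B\<close> equal to \<open>e\<^sub>h\<close> for each
  \<open>h \<in> H\<close> and the column \<open>k\<close> of the left block for each \<open>k \<notin> H\<close>: a kernel vector \<open>v\<close> of this
  \<open>m\<close>-column submatrix vanishes on \<open>H\<close> and satisfies \<open>v\<^sub>i = v\<^sub>j\<close> along every arc \<open>ij \<notin> \<C>\<close>, hence
  along every arc leaving a vertex outside \<open>H\<close>; strong connectivity then propagates the zero
  values on \<open>H \<noteq> {}\<close> to all of \<open>v\<close>.\<close>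

lemma mult_mat_vec_unit_vec:
  fixes M :: "'a::comm_ring_1 mat"
  assumes "M \<in> carrier_mat n k" "i < k"
  shows "M *\<^sub>v unit_vec k i = col M i"
  using assms
  by (intro eq_vecI)
     (auto simp: scalar_prod_def unit_vec_def if_distrib[of "\<lambda>x. _ * x"] sum.delta cong: if_cong)

lemma distinct_cols_if_trivial_kernel:
  fixes M :: "'a::comm_ring_1 mat"
  assumes M: "M \<in> carrier_mat n k"
    and ker: "\<And>v. v \<in> carrier_vec k \<Longrightarrow> M *\<^sub>v v = 0\<^sub>v n \<Longrightarrow> v = 0\<^sub>v k"
  shows "distinct (cols M)"
proof (rule ccontr)
  assume "\<not> distinct (cols M)"
  then obtain i j where ij: "i < k" "j < k" "i \<noteq> j" "col M i = col M j"
    using M by (auto simp: distinct_conv_nth)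
  have "M *\<^sub>v (unit_vec k i - unit_vec k j) = 0\<^sub>v n"
    using ij M by (simp add: mult_minus_distrib_mat_vec[OF M] mult_mat_vec_unit_vec)
  then have "unit_vec k i - unit_vec k j = (0\<^sub>v k :: 'a vec)" by (intro ker) auto
  then have "(unit_vec k i - unit_vec k j) $ i = (0\<^sub>v k :: 'a vec) $ i" by simp
  then show False using ij by simp
qed

lemma (in vec_space) rank_ge_if_column_submatrix_trivial_kernel:
  assumes A: "A \<in> carrier_mat n nc" and M: "M \<in> carrier_mat n k"
    and sub: "set (cols M) \<subseteq> set (cols A)"
    and ker: "\<And>v. v \<in> carrier_vec k \<Longrightarrow> M *\<^sub>v v = 0\<^sub>v n \<Longrightarrow> v = 0\<^sub>v k"
  shows "k \<le> rank A"
proof -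
  have dist: "distinct (cols M)" by (rule distinct_cols_if_trivial_kernel[OF M ker])
  have "lin_indpt (set (cols M))"
  proof
    assume "lin_dep (set (cols M))"
    then show False using lin_depE[OF M _ dist] ker by metis
  qed
  moreover have "card (set (cols M)) = k" using dist M by (simp add: distinct_card)
  ultimately show ?thesis using rank_ge_card_indpt[OF A sub] by simp
qed

lemma rank_ge_if_selected_columns_independent:
  fixes A :: "'a::field mat"
  assumes A: "A \<in> carrier_mat n nc" and f: "\<forall>i<k. f i < nc"
    and ker: "\<And>v. v \<in> carrier_vec k \<Longrightarrow> (\<And>r. r < n \<Longrightarrow> (\<Sum>i<k. A $$ (r, f i) * v $ i) = 0)
      \<Longrightarrow> v = 0\<^sub>v k"
  shows "k \<le> vec_space.rank n A"
proof (rule vec_space.rank_ge_if_column_submatrix_trivial_kernel[OF A])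
  define M where "M = mat n k (\<lambda>(r, i). A $$ (r, f i))"
  show M: "M \<in> carrier_mat n k" unfolding M_def by simp
  show "set (cols M) \<subseteq> set (cols A)"
  proof
    fix x assume "x \<in> set (cols M)"
    then obtain i where i: "i < k" "x = col M i" using M by (auto simp: in_set_conv_nth)
    then have "x = col A (f i)" using A f unfolding M_def by (auto simp: col_def)
    then show "x \<in> set (cols A)" using f i A by (auto simp: in_set_conv_nth intro!: exI[of _ "f i"])
  qed
  fix v assume v: "v \<in> carrier_vec k" and Mv: "M *\<^sub>v v = 0\<^sub>v n"
  show "v = 0\<^sub>v k"
  proof (rule ker[OF v])
    fix r assume r: "r < n"
    have "(\<Sum>i<k. A $$ (r, f i) * v $ i) = (M *\<^sub>v v) $ r"
      using r v unfolding M_def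
      by (auto simp: mult_mat_vec_def scalar_prod_def lessThan_atLeast0 intro!: sum.cong)
    then show "(\<Sum>i<k. A $$ (r, f i) * v $ i) = 0" using Mv r by simp
  qed
qed

lemma strongly_connected_closed_set:
  assumes sc: "strongly_connected m J" and u: "u < m" "u \<in> S" and v: "v < m"
    and closed: "\<And>x y. x \<in> S \<Longrightarrow> (x, y) \<in> J \<Longrightarrow> y \<in> S"
  shows "v \<in> S"
proof -
  have "(u, v) \<in> J\<^sup>*" using sc u v unfolding strongly_connected_def by blast
  then show ?thesis by (induction rule: rtrancl_induct) (use u closed in auto)
qed

lemma strongly_connected_propagate_zero:
  fixes w :: "nat \<Rightarrow> 'a::zero"
  assumes sc: "strongly_connected m J" and h: "h < m" "h \<in> H"
    and zero: "\<And>x. x \<in> H \<Longrightarrow> w x = 0"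
    and arc: "\<And>x y. (x, y) \<in> J \<Longrightarrow> x \<notin> H \<Longrightarrow> w x = w y"
    and k: "k < m"
  shows "w k = 0"
proof (rule ccontr)
  assume wk: "w k \<noteq> 0"
  have "h \<in> {x. w x = w k}"
  proof (rule strongly_connected_closed_set[OF sc k _ h(1)])
    fix x y assume "x \<in> {x. w x = w k}" "(x, y) \<in> J"
    moreover then have "x \<notin> H" using wk zero by auto
    ultimately show "y \<in> {x. w x = w k}" using arc by force
  qed simp
  then show False using wk zero h by simp
qed

lemma obtain_arc_meeting_head:
  assumes sc: "strongly_connected m J" and arcs: "J \<subseteq> {..<m} \<times> {..<m}"
    and Cs: "Cs \<noteq> {}" "Cs \<subset> J"
  obtains x y h l where "(x, y) \<in> J - Cs" "(h, l) \<in> Cs" "h = x \<or> h = y"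
proof (rule ccontr)
  assume none: "\<not> thesis"
  note witness = that
  have not_head: "v \<notin> fst ` Cs" if "(u, v) \<in> J - Cs \<or> (v, u) \<in> J - Cs" for u v
  proof
    assume "v \<in> fst ` Cs"
    then obtain l where "(v, l) \<in> Cs" by force
    then show False using that none witness by blast
  qed
  obtain x y where xy: "(x, y) \<in> J - Cs" using Cs by auto
  obtain h l where hl: "(h, l) \<in> Cs" using Cs by auto
  have "h \<in> {v. v \<notin> fst ` Cs}"
  proof (rule strongly_connected_closed_set[OF sc, of x])
    show "x < m" "h < m" using xy hl arcs Cs by blast+
    show "x \<in> {v. v \<notin> fst ` Cs}" using not_head xy by blast
    fix a b assume "a \<in> {v. v \<notin> fst ` Cs}" "(a, b) \<in> J"
    then have "(a, b) \<in> J - Cs" by force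
    then show "b \<in> {v. v \<notin> fst ` Cs}" using not_head by blast
  qed
  then show False using hl by force
qed

lemma sum_signed_pair:
  fixes w :: "nat \<Rightarrow> 'a::ab_group_add"
  assumes "x < m" "y < m" "x \<noteq> y"
  shows "(\<Sum>i<m. (if i = x then - w i else if i = y then w i else 0)) = w y - w x"
proof -
  have "(\<Sum>i<m. (if i = x then - w i else if i = y then w i else 0))
      = (\<Sum>i<m. (if i = y then w y else 0) + (if x = i then - w x else 0))"
    using assms by (intro sum.cong) auto
  also have "\<dots> = w y - w x" using assms by (simp add: sum.distrib)
  finally show ?thesis .
qed

lemma C_mat_carrier: "C_mat m ds \<in> carrier_mat (length ds) m"
  unfolding C_mat_def by (intro carrier_matI) auto

lemma B_mat_carrier: "B_mat m cs \<in> carrier_mat m (length cs)"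
  unfolding B_mat_def by (intro carrier_matI) auto

lemma index_C_mat:
  assumes "a < length ds" "k < m"
  shows "C_mat m ds $$ (a, k) = (if k = fst (ds ! a) then -1 else if k = snd (ds ! a) then 1 else 0)"
  using assms unfolding C_mat_def mat_of_rows_def c_row_def by (simp add: case_prod_beta)

lemma index_B_mat:
  assumes "r < m" "t < length cs"
  shows "B_mat m cs $$ (r, t) = (if r = fst (cs ! t) then 1 else 0)"
  using assms unfolding B_mat_def mat_of_cols_def b_vec_def by (simp add: case_prod_beta unit_vec_def)

lemma transfer_mat_one:
  assumes "Cm \<in> carrier_mat p m"
  shows "transfer_mat m Cm Bm 1 = Cm * Bm"
proof -
  have "(1::complex) \<cdot>\<^sub>m 1\<^sub>m m = 1\<^sub>m m" by (rule eq_matI) auto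
  then show ?thesis unfolding transfer_mat_def using assms by simp
qed

lemma transfer_mat_nonzero_if_arc_meets_head:
  assumes xy: "(x, y) \<in> set ds" "x < m" "y < m" "x \<noteq> y"
    and z: "(z, w) \<in> set cs" "z = x \<or> z = y"
  shows "transfer_mat m (C_mat m ds) (B_mat m cs) 1 \<noteq> 0\<^sub>m (length ds) (length cs)"
proof -
  obtain a where a: "a < length ds" "ds ! a = (x, y)" using xy by (metis in_set_conv_nth)
  obtain t where t: "t < length cs" "cs ! t = (z, w)" using z by (metis in_set_conv_nth)
  have zm: "z < m" using z xy by auto
  have "(C_mat m ds * B_mat m cs) $$ (a, t) = (\<Sum>i<m. C_mat m ds $$ (a, i) * B_mat m cs $$ (i, t))"
    using a t C_mat_carrier[of m ds] B_mat_carrier[of m cs]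
    by (simp add: scalar_prod_def lessThan_atLeast0)
  also have "\<dots> = (\<Sum>i<m. if i = z then C_mat m ds $$ (a, z) else 0)"
    using t by (intro sum.cong) (auto simp: index_B_mat)
  also have "\<dots> = C_mat m ds $$ (a, z)" using zm by simp
  also have "\<dots> \<noteq> 0" using a z xy zm by (auto simp: index_C_mat)
  finally show ?thesis
    using a t by (auto simp: transfer_mat_one[OF C_mat_carrier])
qed

lemma pencil_carrier:
  assumes "Cm \<in> carrier_mat p m" "Bm \<in> carrier_mat m q"
  shows "pencil m Cm Bm l \<in> carrier_mat (m + p) (m + q)"
  using assms unfolding pencil_def by auto

lemma index_pencil:
  assumes "Cm \<in> carrier_mat p m" "Bm \<in> carrier_mat m q" "r < m + p" "c < m + q"
  shows "pencil m Cm Bm l $$ (r, c) =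
    (if r < m then if c < m then (if r = c then l else 0) else Bm $$ (r, c - m)
     else if c < m then Cm $$ (r - m, c) else 0)"
  using assms unfolding pencil_def by simp

lemma rank_pencil_nonzero:
  assumes C: "Cm \<in> carrier_mat p m" and B: "Bm \<in> carrier_mat m q" and l: "l \<noteq> 0"
  shows "m \<le> vec_space.rank (m + p) (pencil m Cm Bm l)"
proof (rule rank_ge_if_selected_columns_independent[OF pencil_carrier[OF C B], of m id])
  fix v :: "complex vec"
  assume v: "v \<in> carrier_vec m"
    and ker: "\<And>r. r < m + p \<Longrightarrow> (\<Sum>i<m. pencil m Cm Bm l $$ (r, id i) * v $ i) = 0"
  show "v = 0\<^sub>v m"
  proof (rule eq_vecI)
    fix r assume "r < dim_vec (0\<^sub>v m)"
    then have r: "r < m" by simp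
    have "(\<Sum>i<m. pencil m Cm Bm l $$ (r, id i) * v $ i) = (\<Sum>i<m. if i = r then l * v $ r else 0)"
      using r by (intro sum.cong) (auto simp: index_pencil[OF C B])
    then show "v $ r = 0\<^sub>v m $ r" using ker[of r] r l by simp
  qed (use v in simp)
qed auto

lemma rank_pencil_zero:
  assumes sc: "strongly_connected m J" and arcs: "J \<subseteq> {..<m} \<times> {..<m}"
    and no_loops: "\<forall>(i, j) \<in> J. i \<noteq> j"
    and J: "set cs \<union> set ds = J" and cs: "cs \<noteq> []"
  shows "m \<le> vec_space.rank (m + length ds) (pencil m (C_mat m ds) (B_mat m cs) 0)"
proof -
  define H where "H = fst ` set cs"
  define idx where "idx k = (SOME t. t < length cs \<and> fst (cs ! t) = k)" for k
  have idx: "idx k < length cs" "fst (cs ! idx k) = k" if "k \<in> H" for k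
    using someI_ex[of "\<lambda>t. t < length cs \<and> fst (cs ! t) = k"] that
    unfolding idx_def H_def by (auto simp: in_set_conv_nth) (metis fst_conv)+
  have Hm: "k < m" if "k \<in> H" for k using that J arcs unfolding H_def by auto
  note P = index_pencil[OF C_mat_carrier B_mat_carrier]
  define f where "f k = (if k \<in> H then m + idx k else k)" for k
  show ?thesis
  proof (rule rank_ge_if_selected_columns_independent[OF pencil_carrier[OF C_mat_carrier B_mat_carrier]])
    show "\<forall>i<m. f i < m + length cs" using idx unfolding f_def by auto
    fix v :: "complex vec" assume v: "v \<in> carrier_vec m"
      and ker: "\<And>r. r < m + length ds \<Longrightarrow> (\<Sum>i<m. pencil m (C_mat m ds) (B_mat m cs) 0 $$ (r, f i) * v $ i) = 0"
    have zero: "v $ h = 0" if h: "h \<in> H" for h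
    proof -
      have "(\<Sum>i<m. pencil m (C_mat m ds) (B_mat m cs) 0 $$ (h, f i) * v $ i)
          = (\<Sum>i<m. if i = h then v $ h else 0)"
        using h Hm[OF h] idx by (intro sum.cong) (auto simp: f_def P index_B_mat)
      then show ?thesis using ker[of h] Hm[OF h] by simp
    qed
    have arc: "v $ x = v $ y" if xy: "(x, y) \<in> J" "x \<notin> H" for x y
    proof -
      have "(x, y) \<in> set ds" using xy J unfolding H_def by force
      then obtain a where a: "a < length ds" "ds ! a = (x, y)" by (metis in_set_conv_nth)
      have "(\<Sum>i<m. pencil m (C_mat m ds) (B_mat m cs) 0 $$ (m + a, f i) * v $ i)
          = (\<Sum>i<m. if i = x then - v $ i else if i = y then v $ i else 0)"
        using a idx zero by (intro sum.cong) (auto simp: f_def P index_C_mat)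
      also have "\<dots> = v $ y - v $ x" using xy arcs no_loops by (intro sum_signed_pair) auto
      finally show ?thesis using ker[of "m + a"] a by simp
    qed
    obtain h where h: "h \<in> H" using cs unfolding H_def by (cases cs) auto
    show "v = 0\<^sub>v m"
      using strongly_connected_propagate_zero[OF sc Hm[OF h] h zero arc] v by (intro eq_vecI) auto
  qed
qed

theorem lemma2:
  fixes m :: nat and J :: "(nat \<times> nat) set"
  assumes arcs: "J \<subseteq> {..<m} \<times> {..<m}"
    and no_loops: "\<forall>(i, j) \<in> J. i \<noteq> j"
    and sc: "strongly_connected m J"
  shows "\<forall>Cs. Cs \<noteq> {} \<and> Cs \<subset> J \<longrightarrow> complementary_complete m J Cs"
proof (intro allI impI)
  fix Cs assume Cs: "Cs \<noteq> {} \<and> Cs \<subset> J"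
  have "finite J" using arcs finite_subset by blast
  then have "finite Cs" using Cs finite_subset by blast
  define cs where "cs = sorted_list_of_set Cs"
  define ds where "ds = sorted_list_of_set (J - Cs)"
  have set_cs: "set cs = Cs" and set_ds: "set ds = J - Cs"
    unfolding cs_def ds_def using \<open>finite J\<close> \<open>finite Cs\<close> by simp_all
  obtain x y z w where xy: "(x, y) \<in> J - Cs" and zw: "(z, w) \<in> Cs" "z = x \<or> z = y"
    using obtain_arc_meeting_head[OF sc arcs] Cs by blast
  have "transfer_mat m (C_mat m ds) (B_mat m cs) 1 \<noteq> 0\<^sub>m (length ds) (length cs)"
    by (rule transfer_mat_nonzero_if_arc_meets_head[of x y _ _ z w])
      (use xy zw arcs no_loops set_cs set_ds in auto)
  moreover have "m \<le> vec_space.rank (m + length ds) (pencil m (C_mat m ds) (B_mat m cs) l)" for l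
  proof (cases "l = 0")
    case True
    have "set cs \<union> set ds = J" "cs \<noteq> []" using set_cs set_ds Cs by auto
    then show ?thesis using rank_pencil_zero[OF sc arcs no_loops] True by simp
  qed (use rank_pencil_nonzero[OF C_mat_carrier B_mat_carrier] in blast)
  moreover note carrier_matD[OF C_mat_carrier, of m ds] carrier_matD[OF B_mat_carrier, of m cs]
  ultimately show "complementary_complete m J Cs"
    unfolding complementary_complete_def complete_triple_def cs_def[symmetric] ds_def[symmetric]
    by (metis one_neq_zero)
qed

end
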